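(* Let $\vec B$ be a binary digit vector with scale factor $N$ and cumulative digit function $g$. Then $F_{\vec B}(k/N)=g(k)/\|\vec B\|$ for all $k\in\{0,\dots,N\}$.
   Context: A binary digit vector of length (scale factor) $N\ge3$ is $\vec B=(b_0,\dots,b_{N-1})\in\{0,1\}^N$ with $2\le\|\vec B\|:=\sum_i b_i\le N-1$; its digit set is $D=\{i:b_i=1\}$. With $\phi_d(x)=(x+d)/N$ for $d\in D$, let $\mu_{\vec B}$ be the unique Borel probability measure with $\mu_{\vec B}=\frac{1}{\|\vec B\|}\sum_{d\in D}\mu_{\vec B}\circ\phi_d^{-1}$, supported on the attractor $C_{\vec B}\subset[0,1]$. The CDF is $F_{\vec B}(x)=\mu_{\vec B}([0,x])$. The cumulative digit function is $g(0)=0$, $g(i)=\sum_{j=0}^{i-1}b_j$ for $1\le i\le N$. *)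

theory Defs
  imports "HOL-Probability.Probability"
begin

text \<open>A digit vector of length N is represented by b :: nat => nat, only b 0, ..., b (N-1) matter.\<close>

definition digit_norm :: "nat \<Rightarrow> (nat \<Rightarrow> nat) \<Rightarrow> nat" where
  "digit_norm N b = (\<Sum>i<N. b i)"

definition digit_set :: "nat \<Rightarrow> (nat \<Rightarrow> nat) \<Rightarrow> nat set" where
  "digit_set N b = {i. i < N \<and> b i = 1}"

definition binary_digit_vector :: "nat \<Rightarrow> (nat \<Rightarrow> nat) \<Rightarrow> bool" where
  "binary_digit_vector N b \<longleftrightarrow> 3 \<le> N \<and> (\<forall>i<N. b i \<in> {0, 1})
     \<and> 2 \<le> digit_norm N b \<and> digit_norm N b \<le> N - 1"

definition cum_digit :: "(nat \<Rightarrow> nat) \<Rightarrow> nat \<Rightarrow> nat" where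
  "cum_digit b i = (\<Sum>j<i. b j)"

definition ifs_map :: "nat \<Rightarrow> nat \<Rightarrow> real \<Rightarrow> real" where
  "ifs_map N d x = (x + real d) / real N"

definition self_similar_measure :: "nat \<Rightarrow> (nat \<Rightarrow> nat) \<Rightarrow> real measure \<Rightarrow> bool" where
  "self_similar_measure N b \<mu> \<longleftrightarrow> sets \<mu> = sets borel \<and> prob_space \<mu> \<and>
     (\<forall>A \<in> sets borel. emeasure \<mu> A =
        (\<Sum>d\<in>digit_set N b. emeasure (distr \<mu> borel (ifs_map N d)) A) / of_nat (digit_norm N b))"

definition digit_cdf :: "real measure \<Rightarrow> real \<Rightarrow> real" where
  "digit_cdf \<mu> x = measure \<mu> {0..x}"

end

theory Submission
  imports Defs
begin

text \<open>Since \<open>\<mu>\<close> lives on [0,1], the self-similarity equation at \<open>{0}\<close> reads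
  \<open>\<mu>{0} = [0 \<in> D] \<mu>{0} / \<parallel>B\<parallel>\<close> with \<open>\<parallel>B\<parallel> \<ge> 2\<close>, so \<open>\<mu>\<close> has no atom at 0.
  The preimage of \<open>[0, k/N]\<close> under \<open>\<phi>\<^sub>d\<close> is \<open>[-d, k-d]\<close>, which has measure 1 for
  \<open>d < k\<close> and meets [0,1] at most in \<open>{0}\<close> for \<open>d \<ge> k\<close>; hence the self-similarity
  equation at \<open>[0, k/N]\<close> just counts the digits below \<open>k\<close>.\<close>

lemma self_similar_measureD:
  assumes "self_similar_measure N b \<mu>"
  shows "sets \<mu> = sets borel" and "prob_space \<mu>"
  using assms unfolding self_similar_measure_def by auto

lemma borel_measurable_ifs_map [measurable]: "ifs_map N d \<in> borel_measurable borel"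
  unfolding ifs_map_def by measurable

lemma measure_self_similar:
  assumes ss: "self_similar_measure N b \<mu>"
    and norm_pos: "0 < digit_norm N b"
    and A: "A \<in> sets borel"
  shows "measure \<mu> A =
    (\<Sum>d\<in>digit_set N b. measure \<mu> (ifs_map N d -` A)) / real (digit_norm N b)"
proof -
  interpret prob_space \<mu> using self_similar_measureD(2)[OF ss] .
  have sets: "sets \<mu> = sets borel" using self_similar_measureD(1)[OF ss] .
  then have space: "space \<mu> = UNIV" using sets_eq_imp_space_eq by fastforce
  have meas: "ifs_map N d \<in> \<mu> \<rightarrow>\<^sub>M borel" for d
    unfolding measurable_cong_sets[OF sets refl] by measurable
  have distr: "emeasure (distr \<mu> borel (ifs_map N d)) A =
      ennreal (measure \<mu> (ifs_map N d -` A))" for d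
    using emeasure_distr[OF meas A] by (simp add: space emeasure_eq_measure)
  have "ennreal (measure \<mu> A) =
      (\<Sum>d\<in>digit_set N b. emeasure (distr \<mu> borel (ifs_map N d)) A) / of_nat (digit_norm N b)"
    using ss A unfolding self_similar_measure_def by (simp add: emeasure_eq_measure)
  also have "\<dots> = ennreal
      ((\<Sum>d\<in>digit_set N b. measure \<mu> (ifs_map N d -` A)) / real (digit_norm N b))"
    using norm_pos
    by (simp add: distr sum_ennreal ennreal_of_nat_eq_real_of_nat divide_ennreal sum_nonneg)
  finally show ?thesis by (simp add: sum_nonneg)
qed

lemma vimage_ifs_map_atLeastAtMost:
  assumes "0 < N"
  shows "ifs_map N d -` {x..y} = {real N * x - real d .. real N * y - real d}"
  using assms by (auto simp: ifs_map_def field_simps)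

lemma measure_eq_measure_Int_support:
  assumes "prob_space \<mu>" "sets \<mu> = sets borel" "measure \<mu> C = 1"
    and "C \<in> sets borel" "S \<in> sets borel"
  shows "measure \<mu> S = measure \<mu> (S \<inter> C)"
proof -
  interpret prob_space \<mu> by fact
  show ?thesis
    using assms by (intro finite_measure.measure_space_inter[symmetric]) (auto simp: prob_space)
qed

lemma self_similar_measure_singleton_0:
  assumes ss: "self_similar_measure N b \<mu>"
    and "0 < N" and norm_gt_1: "1 < digit_norm N b"
    and unit: "measure \<mu> {0..1} = 1"
  shows "measure \<mu> {0} = 0"
proof -
  have sets: "sets \<mu> = sets borel" and P: "prob_space \<mu>"
    using self_similar_measureD[OF ss] by auto
  define m where "m = real (digit_norm N b)"
  have vimage_0: "ifs_map N d -` {0} = {- real d}" for d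
    using vimage_ifs_map_atLeastAtMost[OF \<open>0 < N\<close>, of d 0 0] by simp
  have atom_shift: "measure \<mu> (ifs_map N d -` {0}) = (if d = 0 then measure \<mu> {0} else 0)" for d
    using measure_eq_measure_Int_support[OF P sets unit, of "{- real d}"]
    by (cases "d = 0") (simp_all add: vimage_0)
  have "measure \<mu> {0} = (\<Sum>d\<in>digit_set N b. measure \<mu> (ifs_map N d -` {0})) / m"
    unfolding m_def using measure_self_similar[OF ss] norm_gt_1 by simp
  also have "\<dots> = (if 0 \<in> digit_set N b then measure \<mu> {0} else 0) / m"
    by (simp add: atom_shift sum.delta digit_set_def)
  finally have "measure \<mu> {0} = (if 0 \<in> digit_set N b then measure \<mu> {0} else 0) / m" .
  moreover have "1 < m" using norm_gt_1 unfolding m_def by simp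
  ultimately show ?thesis
    by (cases "0 \<in> digit_set N b") (auto simp: field_simps)
qed

lemma measure_integer_interval_no_atom_0:
  fixes d k :: nat
  assumes P: "prob_space \<mu>" and sets: "sets \<mu> = sets borel"
    and unit: "measure \<mu> {0..1} = 1" and no_atom: "measure \<mu> {0} = 0"
  shows "measure \<mu> {- real d .. real k - real d} = (if d < k then 1 else 0)"
proof -
  have "measure \<mu> {- real d .. real k - real d} = measure \<mu> ({- real d .. real k - real d} \<inter> {0..1})"
    by (rule measure_eq_measure_Int_support[OF P sets unit]) simp_all
  also have "{- real d .. real k - real d} \<inter> {0..1} =
      (if d < k then {0..1} else if d = k then {0} else {})"
    by auto
  finally show ?thesis using unit no_atom by simp
qed

lemma card_digit_set_less:
  assumes "\<forall>i<N. b i \<in> {0, 1}" and "k \<le> N"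
  shows "card {d \<in> digit_set N b. d < k} = cum_digit b k"
proof -
  have "b j \<in> {0, 1}" if "j < k" for j
    using assms that by simp
  then have "cum_digit b k = (\<Sum>j<k. if b j = 1 then 1 else 0)"
    unfolding cum_digit_def by (intro sum.cong) auto
  also have "\<dots> = card {j \<in> {..<k}. b j = 1}"
    by (simp add: sum.If_cases Int_def conj_commute)
  also have "{j \<in> {..<k}. b j = 1} = {d \<in> digit_set N b. d < k}"
    unfolding digit_set_def using assms by auto
  finally show ?thesis by simp
qed

theorem lemma2p2:
  fixes N :: nat and b :: "nat \<Rightarrow> nat" and \<mu> :: "real measure"
  assumes "binary_digit_vector N b"
    and "self_similar_measure N b \<mu>"
    and "emeasure \<mu> {0..1} = 1"
  shows "\<forall>k \<le> N. digit_cdf \<mu> (real k / real N) = real (cum_digit b k) / real (digit_norm N b)"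
proof (intro allI impI)
  fix k assume "k \<le> N"
  have N_pos: "0 < N" and norm_gt_1: "1 < digit_norm N b" and binary: "\<forall>i<N. b i \<in> {0, 1}"
    using assms(1) unfolding binary_digit_vector_def by auto
  have sets: "sets \<mu> = sets borel" and P: "prob_space \<mu>"
    using self_similar_measureD[OF assms(2)] by auto
  have unit: "measure \<mu> {0..1} = 1"
    using assms(3) by (simp add: measure_def)
  have no_atom: "measure \<mu> {0} = 0"
    using self_similar_measure_singleton_0[OF assms(2) N_pos norm_gt_1 unit] .
  have vimage: "ifs_map N d -` {0..real k / real N} = {- real d .. real k - real d}" for d
    using vimage_ifs_map_atLeastAtMost[OF N_pos] N_pos by simp
  have "digit_cdf \<mu> (real k / real N) =
      (\<Sum>d\<in>digit_set N b. measure \<mu> (ifs_map N d -` {0..real k / real N})) / real (digit_norm N b)"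
    unfolding digit_cdf_def using measure_self_similar[OF assms(2)] norm_gt_1 by simp
  also have "(\<Sum>d\<in>digit_set N b. measure \<mu> (ifs_map N d -` {0..real k / real N})) =
      real (card {d \<in> digit_set N b. d < k})"
    by (simp add: vimage measure_integer_interval_no_atom_0[OF P sets unit no_atom]
        sum.If_cases Int_def digit_set_def)
  finally show "digit_cdf \<mu> (real k / real N) = real (cum_digit b k) / real (digit_norm N b)"
    using card_digit_set_less[OF binary \<open>k \<le> N\<close>] by simp
qed

end
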